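(* Let $f:\mathbb{R}^n\times\mathbb{R}^m\to\mathbb{R}$ be twice continuously differentiable, $\mu$-strongly convex in $x$ and $\mu$-strongly concave in $y$ ($\mu>0$), with the largest singular value of $\nabla F(z)$ at most $L$ for all $z$ and $\|\nabla F(z)-\nabla F(z')\|\le L_2\|z-z'\|$, where $z=(x;y)$ and $F(z)=(\nabla_x f(x,y);-\nabla_y f(x,y))$. Let $m(z)=\frac12\|F(z)\|^2$, for a starting point $z^0$ let $D=\max\{\|z-z^0\|: m(z)\le m(z^0)\}$ and $L_m=L^2+LL_2D$. Let $\{z^k\}$ be generated by the CRN-SPP method (described in the context) with $\alpha=\frac{\mu^2}{2L_m}$. Then $\{m(z^k)\}$ converges linearly to $0$: $$m(z^{k+1})\le\Big(1-\frac{\mu^2}{6L_m}\Big)^2m(z^k).$$ As a result, it takes at most $\mathcal{O}\big((\kappa^2+\kappa\cdot\frac{L_2}{\mu})\ln(\frac1\epsilon)\big)$ iterations to find a point $\bar z$ with $m(\bar z)\le\epsilon$, where $\kappa=L/\mu$.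
   Context: CRN-SPP with parameters $\bar\gamma>0$, $\rho,\alpha\in(0,1)$: at iterate $z^k=(x^k;y^k)$ let $g^k=\nabla f(z^k)$, $H^k=\nabla^2 f(z^k)$ and for $\gamma>0$ define $f_k(x,y;\gamma)=f(z^k)+\langle g^k,z-z^k\rangle+\frac12(z-z^k)^\top H^k(z-z^k)+\frac{\gamma}{3}\|x-x^k\|^3-\frac{\gamma}{3}\|y-y^k\|^3$. Set $\gamma^k=\bar\gamma$, compute the saddle point $(\tilde x,\tilde y)$ of $\min_x\max_y f_k(x,y;\gamma^k)$, and let $u^k=\tilde x-x^k$, $v^k=\tilde y-y^k$; while $\gamma^k(\|u^k\|+\|v^k\|)>\mu$, replace $\gamma^k$ by $\rho\gamma^k$ and recompute. Set $d^k=(u^k;v^k)$, and $z^{k+1}=z^k+\alpha d^k$ if $m(z^k+\alpha d^k)<m(z^k+d^k)$, otherwise $z^{k+1}=z^k+d^k$. Norms: Euclidean for vectors, largest singular value for matrices. *)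

theory Defs
  imports "HOL-Analysis.Analysis"
begin

definition strongly_convex_on :: "'a::real_normed_vector set \<Rightarrow> real \<Rightarrow> ('a \<Rightarrow> real) \<Rightarrow> bool" where
  "strongly_convex_on S \<mu> h \<longleftrightarrow>
     (\<forall>x\<in>S. \<forall>y\<in>S. \<forall>t\<in>{0..1}.
        h ((1 - t) *\<^sub>R x + t *\<^sub>R y) \<le> (1 - t) * h x + t * h y - \<mu> / 2 * t * (1 - t) * (norm (x - y))\<^sup>2)"

definition Fop :: "(('a::real_normed_vector) \<times> ('b::real_normed_vector) \<Rightarrow> 'a \<times> 'b) \<Rightarrow> 'a \<times> 'b \<Rightarrow> 'a \<times> 'b" where
  "Fop g z = (fst (g z), - snd (g z))"

definition DFop :: "(('a::real_normed_vector) \<times> ('b::real_normed_vector) \<Rightarrow> ('a \<times> 'b) \<Rightarrow>\<^sub>L ('a \<times> 'b)) \<Rightarrow> 'a \<times> 'b \<Rightarrow> 'a \<times> 'b \<Rightarrow> 'a \<times> 'b" where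
  "DFop H z h = (fst (blinfun_apply (H z) h), - snd (blinfun_apply (H z) h))"

definition merit :: "(('a::real_normed_vector) \<times> ('b::real_normed_vector) \<Rightarrow> 'a \<times> 'b) \<Rightarrow> 'a \<times> 'b \<Rightarrow> real" where
  "merit g z = (1/2) * (norm (Fop g z))\<^sup>2"

definition crn_model ::
  "(('a::real_inner) \<times> ('b::real_inner) \<Rightarrow> real) \<Rightarrow> ('a \<times> 'b \<Rightarrow> 'a \<times> 'b) \<Rightarrow> ('a \<times> 'b \<Rightarrow> ('a \<times> 'b) \<Rightarrow>\<^sub>L ('a \<times> 'b))
     \<Rightarrow> 'a \<times> 'b \<Rightarrow> real \<Rightarrow> 'a \<times> 'b \<Rightarrow> real" where
  "crn_model f g H zk \<gamma> z =
     f zk + inner (g zk) (z - zk) + (1/2) * inner (z - zk) (blinfun_apply (H zk) (z - zk))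
     + \<gamma> / 3 * (norm (fst z - fst zk)) ^ 3 - \<gamma> / 3 * (norm (snd z - snd zk)) ^ 3"

definition is_saddle :: "('a \<times> 'b \<Rightarrow> real) \<Rightarrow> 'a \<times> 'b \<Rightarrow> bool" where
  "is_saddle \<phi> p \<longleftrightarrow>
     (\<forall>x y. \<phi> (fst p, y) \<le> \<phi> p \<and> \<phi> p \<le> \<phi> (x, snd p))"

definition crn_disp where
  "crn_disp f g H zk \<gamma> = (THE d. is_saddle (crn_model f g H zk \<gamma>) (zk + d))"

text \<open>Backtracking: gamma^k = gamma_bar * rho^j with j the number of reductions
  performed by the while loop, i.e. the least j with gamma (||u||+||v||) <= mu.\<close>
definition crn_gamma where
  "crn_gamma f g H \<mu> \<gamma>bar \<rho> zk =
     \<gamma>bar * \<rho> ^ (LEAST j. \<gamma>bar * \<rho> ^ j *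
        (norm (fst (crn_disp f g H zk (\<gamma>bar * \<rho> ^ j))) + norm (snd (crn_disp f g H zk (\<gamma>bar * \<rho> ^ j)))) \<le> \<mu>)"

definition crn_step where
  "crn_step f g H \<mu> \<gamma>bar \<rho> \<alpha> zk =
     (let d = crn_disp f g H zk (crn_gamma f g H \<mu> \<gamma>bar \<rho> zk)
      in if merit g (zk + \<alpha> *\<^sub>R d) < merit g (zk + d) then zk + \<alpha> *\<^sub>R d else zk + d)"

end

theory Submission
  imports Defs
begin

text \<open>
  At an iterate \<open>z\<close> the CRN-SPP direction \<open>d = (u, v)\<close> is the unique zero of the model field
  \<open>F z + DF z d + \<gamma> (|u| u, |v| v)\<close>: a zero exists by Brouwer's theorem because the field is
  coercive, and the strong convexity-concavity of the cubic model makes \<open>z + d\<close> its unique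
  saddle point. Consequently \<open>F (z + \<alpha> d) = (1 - \<alpha>) F z - \<alpha> \<gamma> (|u| u, |v| v) + R\<close>, where the
  Taylor remainder satisfies \<open>|R| \<le> L2/2 \<alpha>\<^sup>2 |d|\<^sup>2\<close>. The backtracking test
  \<open>\<gamma> (|u| + |v|) \<le> \<mu>\<close> bounds the square of the cubic term by \<open>\<mu> (|F z| |d| - \<mu> |d|\<^sup>2)\<close>, and on
  the level set of \<open>z\<^sub>0\<close> strong monotonicity and the Lipschitz bound give \<open>L2 |F z| \<le> L\<^sub>m\<close>. For
  \<open>\<alpha> = \<mu>\<^sup>2 / (2 L\<^sub>m)\<close> a sum-of-squares estimate then yields \<open>|F (z + \<alpha> d)| \<le> (1 - \<alpha>/3) |F z|\<close>;
  squaring gives the linear rate for the merit function, and \<open>(1 - q)\<^sup>2 \<le> exp (-2q)\<close> turns it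
  into the iteration bound.
\<close>

section \<open>Calculus and convexity facts\<close>

lemma deriv_ge_of_difference_quotients_ge:
  fixes p b :: "real \<Rightarrow> real"
  assumes p: "(p has_real_derivative D) (at 0)"
    and b: "(b \<longlongrightarrow> B) (at_right 0)"
    and le: "\<And>t. 0 < t \<Longrightarrow> t < 1 \<Longrightarrow> b t \<le> (p t - p 0) / t"
  shows "B \<le> D"
proof -
  have "((\<lambda>t. (p t - p 0) / (t - 0)) \<longlongrightarrow> D) (at_right 0)"
    using has_field_derivative_at_within[OF p] by (simp add: has_field_derivative_iff)
  moreover have "eventually (\<lambda>t. b t \<le> (p t - p 0) / (t - 0)) (at_right 0)"
    unfolding eventually_at_right_field by (rule exI[of _ 1]) (auto intro: le)
  ultimately show ?thesis
    using b by (intro tendsto_le[of "at_right 0"]) simp_all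
qed

lemma deriv_le_of_difference_quotients_le:
  fixes p b :: "real \<Rightarrow> real"
  assumes p: "(p has_real_derivative D) (at 0)"
    and b: "(b \<longlongrightarrow> B) (at_right 0)"
    and le: "\<And>t. 0 < t \<Longrightarrow> t < 1 \<Longrightarrow> (p t - p 0) / t \<le> b t"
  shows "D \<le> B"
proof -
  have "((\<lambda>t. (p t - p 0) / (t - 0)) \<longlongrightarrow> D) (at_right 0)"
    using has_field_derivative_at_within[OF p] by (simp add: has_field_derivative_iff)
  moreover have "eventually (\<lambda>t. (p t - p 0) / (t - 0) \<le> b t) (at_right 0)"
    unfolding eventually_at_right_field by (rule exI[of _ 1]) (auto intro: le)
  ultimately show ?thesis
    using b by (intro tendsto_le[of "at_right 0"]) simp_all
qed

lemma has_real_derivative_along_line: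
  fixes h :: "'a::real_normed_vector \<Rightarrow> real"
  assumes "(h has_derivative h') (at (z + t *\<^sub>R v))"
  shows "((\<lambda>t. h (z + t *\<^sub>R v)) has_real_derivative h' v) (at t)"
proof -
  have "((\<lambda>t. z + t *\<^sub>R v) has_derivative (\<lambda>s. s *\<^sub>R v)) (at t)"
    by (auto intro!: derivative_eq_intros)
  from has_derivative_compose[OF this assms]
  have "((\<lambda>t. h (z + t *\<^sub>R v)) has_derivative (\<lambda>s. h' (s *\<^sub>R v))) (at t)" .
  moreover have "(\<lambda>s. h' (s *\<^sub>R v)) = (*) (h' v)"
    using linear_scale[OF has_derivative_linear[OF assms]] by auto
  ultimately show ?thesis
    unfolding has_field_derivative_def by simp
qed

lemma has_real_derivative_inner_along_line:
  fixes F :: "'a::real_normed_vector \<Rightarrow> 'b::real_inner"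
  assumes "(F has_derivative F') (at (z + t *\<^sub>R v))"
  shows "((\<lambda>t. inner e (F (z + t *\<^sub>R v))) has_real_derivative inner e (F' v)) (at t)"
  using has_real_derivative_along_line[OF has_derivative_inner_right[OF assms]] .

lemma strongly_convex_on_gradient_ineq:
  fixes h :: "'a::real_normed_vector \<Rightarrow> real"
  assumes sc: "strongly_convex_on UNIV \<mu> h" and h: "(h has_derivative h') (at x)"
  shows "h x + h' (y - x) + \<mu> / 2 * (norm (y - x))\<^sup>2 \<le> h y"
proof -
  define p where "p t = h (x + t *\<^sub>R (y - x))" for t
  have "(p has_real_derivative h' (y - x)) (at 0)"
    unfolding p_def using has_real_derivative_along_line[of h h' x 0 "y - x"] h by simp
  then have "h' (y - x) \<le> h y - h x - \<mu> / 2 * (norm (y - x))\<^sup>2 * (1 - 0)"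
  proof (rule deriv_le_of_difference_quotients_le)
    show "((\<lambda>t. h y - h x - \<mu> / 2 * (norm (y - x))\<^sup>2 * (1 - t)) \<longlongrightarrow>
        h y - h x - \<mu> / 2 * (norm (y - x))\<^sup>2 * (1 - 0)) (at_right 0)"
      by (intro tendsto_intros)
    fix t :: real assume t: "0 < t" "t < 1"
    have "h ((1 - t) *\<^sub>R x + t *\<^sub>R y) \<le> (1 - t) * h x + t * h y - \<mu> / 2 * t * (1 - t) * (norm (x - y))\<^sup>2"
      using sc t unfolding strongly_convex_on_def by auto
    moreover have "(1 - t) *\<^sub>R x + t *\<^sub>R y = x + t *\<^sub>R (y - x)"
      by (simp add: algebra_simps)
    ultimately have "p t - p 0 \<le> t * (h y - h x - \<mu> / 2 * (norm (y - x))\<^sup>2 * (1 - t))"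
      unfolding p_def by (simp add: norm_minus_commute algebra_simps)
    then show "(p t - p 0) / t \<le> h y - h x - \<mu> / 2 * (norm (y - x))\<^sup>2 * (1 - t)"
      using t by (simp add: divide_le_eq mult.commute)
  qed
  then show ?thesis by simp
qed

text \<open>The gradient inequality of the convex function \<open>norm ^ 3 / 3\<close>, whose gradient at \<open>a\<close>
  is \<open>norm a *\<^sub>R a\<close>.\<close>

lemma norm_cube_gradient_ineq:
  fixes a b :: "'a::real_inner"
  shows "norm a * inner a (b - a) \<le> (norm b ^ 3 - norm a ^ 3) / 3"
proof -
  have "norm a * inner a b \<le> norm a * (norm a * norm b)"
    by (simp add: mult_left_mono norm_cauchy_schwarz)
  moreover have "0 \<le> (norm b - norm a)\<^sup>2 * (norm b + 2 * norm a)"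
    by simp
  ultimately show ?thesis
    by (simp add: power2_norm_eq_inner[symmetric] algebra_simps
        power2_eq_square power3_eq_cube)
qed

lemma lipschitz_derivative_taylor_bound:
  fixes F :: "'a::real_normed_vector \<Rightarrow> 'b::real_inner"
  assumes F: "\<And>w. (F has_derivative DF w) (at w)"
    and lip: "\<And>w w'. onorm (\<lambda>h. DF w h - DF w' h) \<le> L2 * norm (w - w')"
    and L2: "L2 \<ge> 0"
  shows "norm (F (z + h) - F z - DF z h) \<le> L2 / 2 * (norm h)\<^sup>2"
proof -
  define R where "R = F (z + h) - F z - DF z h"
  have "inner e R \<le> norm e * (L2 / 2 * (norm h)\<^sup>2)" for e
  proof -
    define p where "p t = inner e (F (z + t *\<^sub>R h)) - t * inner e (DF z h)
      - norm e * (L2 / 2 * (norm h)\<^sup>2) * t\<^sup>2" for t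
    define p' where "p' t = inner e (DF (z + t *\<^sub>R h) h - DF z h) - norm e * (L2 * (norm h)\<^sup>2) * t" for t
    have "(p has_real_derivative p' t) (at t)" for t
      unfolding p_def p'_def inner_diff_right
      by (rule derivative_eq_intros has_real_derivative_inner_along_line[OF F] refl | simp)+
    then obtain \<xi> where \<xi>: "0 < \<xi>" "\<xi> < 1" "p 1 - p 0 = p' \<xi>"
      using MVT2[of 0 1 p p'] by auto
    have "bounded_linear (\<lambda>k. DF (z + \<xi> *\<^sub>R h) k - DF z k)"
      using F has_derivative_bounded_linear bounded_linear_sub by blast
    then have "norm (DF (z + \<xi> *\<^sub>R h) h - DF z h) \<le> onorm (\<lambda>k. DF (z + \<xi> *\<^sub>R h) k - DF z k) * norm h"
      by (rule onorm)
    also have "\<dots> \<le> L2 * norm (\<xi> *\<^sub>R h) * norm h"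
      using lip[of "z + \<xi> *\<^sub>R h" z] by (simp add: mult_right_mono)
    finally have "norm (DF (z + \<xi> *\<^sub>R h) h - DF z h) \<le> L2 * norm (\<xi> *\<^sub>R h) * norm h" .
    then have "inner e (DF (z + \<xi> *\<^sub>R h) h - DF z h) \<le> norm e * (L2 * norm (\<xi> *\<^sub>R h) * norm h)"
      by (meson mult_left_mono norm_cauchy_schwarz norm_ge_zero order_trans)
    then have "p' \<xi> \<le> 0"
      using \<xi> unfolding p'_def by (simp add: power2_eq_square algebra_simps)
    with \<xi> show ?thesis
      unfolding p_def R_def by (simp add: inner_diff_right)
  qed
  from this[of R] have "norm R * norm R \<le> norm R * (L2 / 2 * (norm h)\<^sup>2)"
    by (simp add: power2_norm_eq_inner[symmetric] power2_eq_square)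
  then show ?thesis
    unfolding R_def[symmetric] using L2
    by (cases "norm R = 0") (simp_all add: mult_le_cancel_left_pos)
qed

lemma second_difference_mean_value:
  fixes f :: "'a::real_inner \<Rightarrow> real" and g :: "'a \<Rightarrow> 'a" and H :: "'a \<Rightarrow> 'a \<Rightarrow>\<^sub>L 'a"
  assumes grad: "\<And>w. (f has_derivative (\<lambda>h. inner (g w) h)) (at w)"
    and hess: "\<And>w. (g has_derivative blinfun_apply (H w)) (at w)"
    and t: "t > 0"
  obtains \<xi> where "norm (\<xi> - w) \<le> t * (norm p + norm q)"
    and "f (w + t *\<^sub>R p + t *\<^sub>R q) - f (w + t *\<^sub>R p) - f (w + t *\<^sub>R q) + f w = t\<^sup>2 * inner p (H \<xi> q)"
proof -
  define \<phi> where "\<phi> s = f ((w + t *\<^sub>R q) + s *\<^sub>R p) - f (w + s *\<^sub>R p)" for s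
  define \<phi>' where "\<phi>' s = inner (g ((w + t *\<^sub>R q) + s *\<^sub>R p)) p - inner (g (w + s *\<^sub>R p)) p" for s
  have "(\<phi> has_real_derivative \<phi>' s) (at s)" for s
    unfolding \<phi>_def \<phi>'_def by (intro DERIV_diff has_real_derivative_along_line grad)
  then obtain \<sigma> where \<sigma>: "0 < \<sigma>" "\<sigma> < t" "\<phi> t - \<phi> 0 = t * \<phi>' \<sigma>"
    using MVT2[of 0 t \<phi> \<phi>'] t by auto
  define \<psi> where "\<psi> \<tau> = inner p (g ((w + \<sigma> *\<^sub>R p) + \<tau> *\<^sub>R q))" for \<tau>
  define \<psi>' where "\<psi>' \<tau> = inner p (H ((w + \<sigma> *\<^sub>R p) + \<tau> *\<^sub>R q) q)" for \<tau>
  have "(\<psi> has_real_derivative \<psi>' \<tau>) (at \<tau>)" for \<tau>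
    unfolding \<psi>_def \<psi>'_def by (rule has_real_derivative_inner_along_line[OF hess])
  then obtain \<tau> where \<tau>: "0 < \<tau>" "\<tau> < t" "\<psi> t - \<psi> 0 = t * \<psi>' \<tau>"
    using MVT2[of 0 t \<psi> \<psi>'] t by auto
  show ?thesis
  proof
    have "norm (\<sigma> *\<^sub>R p + \<tau> *\<^sub>R q) \<le> \<sigma> * norm p + \<tau> * norm q"
      using norm_triangle_ineq[of "\<sigma> *\<^sub>R p" "\<tau> *\<^sub>R q"] \<sigma> \<tau> by simp
    also have "\<dots> \<le> t * (norm p + norm q)"
      using \<sigma> \<tau> by (simp add: distrib_left add_mono mult_right_mono)
    finally show "norm ((w + \<sigma> *\<^sub>R p + \<tau> *\<^sub>R q) - w) \<le> t * (norm p + norm q)"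
      by (simp add: add.assoc)
    have "\<phi>' \<sigma> = \<psi> t - \<psi> 0"
      unfolding \<phi>'_def \<psi>_def by (simp add: inner_commute algebra_simps)
    then show "f (w + t *\<^sub>R p + t *\<^sub>R q) - f (w + t *\<^sub>R p) - f (w + t *\<^sub>R q) + f w
        = t\<^sup>2 * inner p (H (w + \<sigma> *\<^sub>R p + \<tau> *\<^sub>R q) q)"
      using \<sigma>(3) \<tau>(3) unfolding \<phi>_def \<psi>'_def by (simp add: power2_eq_square algebra_simps)
  qed
qed

text \<open>Schwarz's theorem: both \<open>inner p (H w q)\<close> and \<open>inner q (H w p)\<close> are the limit of the
  second difference quotient, which is symmetric in \<open>p\<close> and \<open>q\<close>.\<close>

lemma second_difference_quotient_tendsto:
  fixes f :: "'a::real_inner \<Rightarrow> real" and g :: "'a \<Rightarrow> 'a" and H :: "'a \<Rightarrow> 'a \<Rightarrow>\<^sub>L 'a"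
  assumes grad: "\<And>w. (f has_derivative (\<lambda>h. inner (g w) h)) (at w)"
    and hess: "\<And>w. (g has_derivative blinfun_apply (H w)) (at w)"
    and cont: "isCont H w"
  shows "((\<lambda>t. (f (w + t *\<^sub>R p + t *\<^sub>R q) - f (w + t *\<^sub>R p) - f (w + t *\<^sub>R q) + f w) / t\<^sup>2)
      \<longlongrightarrow> inner p (H w q)) (at_right 0)"
proof -
  have "\<forall>t. \<exists>\<xi>. 0 < t \<longrightarrow> norm (\<xi> - w) \<le> t * (norm p + norm q) \<and>
      f (w + t *\<^sub>R p + t *\<^sub>R q) - f (w + t *\<^sub>R p) - f (w + t *\<^sub>R q) + f w = t\<^sup>2 * inner p (H \<xi> q)"
    using second_difference_mean_value[OF grad hess] by metis
  then obtain \<xi> where \<xi>: "\<And>t. 0 < t \<Longrightarrow> norm (\<xi> t - w) \<le> t * (norm p + norm q)"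
    "\<And>t. 0 < t \<Longrightarrow> f (w + t *\<^sub>R p + t *\<^sub>R q) - f (w + t *\<^sub>R p) - f (w + t *\<^sub>R q) + f w
       = t\<^sup>2 * inner p (H (\<xi> t) q)"
    by metis
  have "((\<lambda>t. \<xi> t - w) \<longlongrightarrow> 0) (at_right 0)"
  proof (rule Lim_null_comparison)
    show "eventually (\<lambda>t. norm (\<xi> t - w) \<le> t * (norm p + norm q)) (at_right 0)"
      using \<xi>(1) eventually_at_right_less[of 0] by (auto elim: eventually_mono)
    show "((\<lambda>t. t * (norm p + norm q)) \<longlongrightarrow> 0) (at_right (0::real))"
      by (auto intro!: tendsto_eq_intros)
  qed
  then have "(\<xi> \<longlongrightarrow> w) (at_right 0)"
    by (simp add: Lim_null[symmetric])
  then have "((\<lambda>t. inner p (H (\<xi> t) q)) \<longlongrightarrow> inner p (H w q)) (at_right 0)"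
    by (intro tendsto_intros isCont_tendsto_compose[OF cont])
  moreover have "eventually (\<lambda>t. inner p (H (\<xi> t) q) =
      (f (w + t *\<^sub>R p + t *\<^sub>R q) - f (w + t *\<^sub>R p) - f (w + t *\<^sub>R q) + f w) / t\<^sup>2) (at_right 0)"
    using \<xi>(2) eventually_at_right_less[of 0] by (auto elim: eventually_mono)
  ultimately show ?thesis
    by (rule Lim_transform_eventually)
qed

lemma hessian_symmetric:
  fixes f :: "'a::real_inner \<Rightarrow> real" and g :: "'a \<Rightarrow> 'a" and H :: "'a \<Rightarrow> 'a \<Rightarrow>\<^sub>L 'a"
  assumes grad: "\<And>w. (f has_derivative (\<lambda>h. inner (g w) h)) (at w)"
    and hess: "\<And>w. (g has_derivative blinfun_apply (H w)) (at w)"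
    and cont: "isCont H w"
  shows "inner p (H w q) = inner q (H w p)"
proof (rule tendsto_unique)
  show "at_right (0::real) \<noteq> bot" by simp
  show "((\<lambda>t. (f (w + t *\<^sub>R p + t *\<^sub>R q) - f (w + t *\<^sub>R p) - f (w + t *\<^sub>R q) + f w) / t\<^sup>2)
      \<longlongrightarrow> inner p (H w q)) (at_right 0)"
    by (rule second_difference_quotient_tendsto[OF grad hess cont])
  have "f (w + t *\<^sub>R q + t *\<^sub>R p) - f (w + t *\<^sub>R q) - f (w + t *\<^sub>R p) + f w
      = f (w + t *\<^sub>R p + t *\<^sub>R q) - f (w + t *\<^sub>R p) - f (w + t *\<^sub>R q) + f w" for t :: real
    by (simp add: algebra_simps)
  then show "((\<lambda>t. (f (w + t *\<^sub>R p + t *\<^sub>R q) - f (w + t *\<^sub>R p) - f (w + t *\<^sub>R q) + f w) / t\<^sup>2)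
      \<longlongrightarrow> inner q (H w p)) (at_right 0)"
    using second_difference_quotient_tendsto[OF grad hess cont, of q p] by (simp only:)
qed

lemma exists_zero_of_coercive:
  fixes G :: "'a::euclidean_space \<Rightarrow> 'a"
  assumes cont: "continuous_on UNIV G" and \<mu>: "\<mu> > 0"
    and coercive: "\<And>p. \<mu> * (norm p)\<^sup>2 - c * norm p \<le> inner (G p) p"
  shows "\<exists>p. G p = 0"
proof (rule ccontr)
  assume nz: "\<nexists>p. G p = 0"
  define R where "R = \<bar>c\<bar> / \<mu> + 1"
  have R: "R > 0" "\<bar>c\<bar> < \<mu> * R"
    using \<mu> by (simp_all add: R_def add_pos_nonneg field_simps)
  text \<open>A fixed point of this self-map of the ball would be a point of the sphere where
    \<open>G\<close> points strictly inwards.\<close>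
  define h where "h p = - (R / norm (G p)) *\<^sub>R G p" for p
  have "continuous_on (cball 0 R) h"
    unfolding h_def using nz by (intro continuous_intros continuous_on_subset[OF cont]) auto
  moreover have "h \<in> cball 0 R \<rightarrow> cball 0 R"
    using nz R by (auto simp: h_def)
  ultimately obtain p where "h p = p"
    using brouwer[of "cball 0 R" h] R by auto
  then have p: "p = - (R / norm (G p)) *\<^sub>R G p"
    unfolding h_def by simp
  have Gp: "G p \<noteq> 0" using nz by auto
  have "norm p = R"
    using arg_cong[OF p, of norm] R Gp by simp
  moreover have "inner (G p) p = - R * norm (G p)"
    using arg_cong[OF p, of "inner (G p)"] Gp by (simp add: power2_norm_eq_inner[symmetric] power2_eq_square)
  ultimately have "\<mu> * R * R - c * R \<le> - R * norm (G p)"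
    using coercive[of p] by (simp add: power2_eq_square)
  moreover have "\<bar>c\<bar> * R < \<mu> * R * R"
    using R by simp
  moreover have "c * R \<le> \<bar>c\<bar> * R"
    using R(1) by (simp add: mult_right_mono)
  moreover have "0 \<le> R * norm (G p)"
    using R(1) by simp
  ultimately show False
    by linarith
qed

lemma geometric_decay_below:
  fixes a :: "nat \<Rightarrow> real"
  assumes nonneg: "\<And>k. 0 \<le> a k" and step: "\<And>k. a (Suc k) \<le> c * a k"
    and c: "0 \<le> c" "c \<le> exp (- r)" and \<epsilon>: "\<epsilon> > 0"
    and k: "ln (a 0 / \<epsilon>) / r \<le> real k" and r: "r > 0"
  shows "a k \<le> \<epsilon>"
proof -
  have decay: "a n \<le> exp (- r * real n) * a 0" for n
  proof (induction n)
    case (Suc n)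
    have "a (Suc n) \<le> exp (- r) * a n"
      using step[of n] c nonneg[of n] by (meson mult_right_mono order_trans)
    also have "\<dots> \<le> exp (- r) * (exp (- r * real n) * a 0)"
      using Suc.IH by simp
    finally show ?case
      by (simp add: mult.assoc[symmetric] distrib_left flip: exp_add)
  qed simp
  show ?thesis
  proof (cases "a 0 \<le> \<epsilon>")
    case True
    have "exp (- r * real k) \<le> 1" using r by simp
    then have "exp (- r * real k) * a 0 \<le> a 0"
      using nonneg[of 0] by (simp add: mult_left_le_one_le)
    then show ?thesis
      using decay[of k] True by linarith
  next
    case False
    then have "ln (a 0 / \<epsilon>) \<le> r * real k"
      using k r by (simp add: divide_le_eq mult.commute)
    then have "exp (- r * real k) \<le> exp (- ln (a 0 / \<epsilon>))"
      by simp
    also have "\<dots> = \<epsilon> / a 0"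
      using False \<epsilon> by (simp add: exp_minus inverse_divide)
    finally have "exp (- r * real k) \<le> \<epsilon> / a 0" .
    then have "exp (- r * real k) * a 0 \<le> \<epsilon> / a 0 * a 0"
      using nonneg[of 0] by (rule mult_right_mono)
    then show ?thesis
      using decay[of k] False \<epsilon> by simp
  qed
qed

lemma one_minus_square_le_exp:
  fixes q :: real
  assumes "q \<le> 1"
  shows "(1 - q)\<^sup>2 \<le> exp (- (2 * q))"
proof -
  have "(1 - q)\<^sup>2 \<le> (exp (- q))\<^sup>2"
    using assms exp_ge_add_one_self[of "- q"] by (intro power_mono) simp_all
  then show ?thesis
    by (simp add: power2_eq_square flip: exp_add)
qed

lemma power2_norm_prod: "(norm z)\<^sup>2 = (norm (fst z))\<^sup>2 + (norm (snd z))\<^sup>2"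
  unfolding norm_prod_def by simp

section \<open>The saddle-point operator\<close>

locale saddle_problem =
  fixes f :: "('a::euclidean_space) \<times> ('b::euclidean_space) \<Rightarrow> real"
    and g :: "'a \<times> 'b \<Rightarrow> 'a \<times> 'b"
    and H :: "'a \<times> 'b \<Rightarrow> ('a \<times> 'b) \<Rightarrow>\<^sub>L ('a \<times> 'b)"
    and \<mu> L L2 :: real
  assumes grad: "\<And>w. (f has_derivative (\<lambda>h. inner (g w) h)) (at w)"
    and hess: "\<And>w. (g has_derivative blinfun_apply (H w)) (at w)"
    and hess_cont: "continuous_on UNIV H"
    and mu_pos: "\<mu> > 0"
    and sconvex: "\<And>y. strongly_convex_on UNIV \<mu> (\<lambda>x. f (x, y))"
    and sconcave: "\<And>x. strongly_convex_on UNIV \<mu> (\<lambda>y. - f (x, y))"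
    and DF_bound: "\<And>w. onorm (DFop H w) \<le> L"
    and DF_lip: "\<And>w w'. onorm (\<lambda>h. DFop H w h - DFop H w' h) \<le> L2 * norm (w - w')"
begin

abbreviation "F \<equiv> Fop g"
abbreviation "DF \<equiv> DFop H"

lemma F_has_derivative: "(F has_derivative DF w) (at w)"
proof -
  have "((\<lambda>z. (fst (g z), - snd (g z))) has_derivative (\<lambda>h. (fst (H w h), - snd (H w h)))) (at w)"
    by (intro has_derivative_Pair has_derivative_fst has_derivative_snd has_derivative_minus hess)
  then show ?thesis
    unfolding Fop_def[abs_def] DFop_def[abs_def] .
qed

lemma DF_bounded_linear: "bounded_linear (DF w)"
  using F_has_derivative has_derivative_bounded_linear by blast

lemma F_continuous: "continuous_on S F"
  using F_has_derivative by (meson continuous_at_imp_continuous_on has_derivative_continuous)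

lemma gradient_ineq_x: "f (x, y) + inner (fst (g (x, y))) (x' - x) + \<mu> / 2 * (norm (x' - x))\<^sup>2 \<le> f (x', y)"
proof -
  have "((\<lambda>x. (x, y)) has_derivative (\<lambda>v. (v, 0))) (at x)"
    by (intro derivative_intros)
  from has_derivative_compose[OF this grad]
  have "((\<lambda>x. f (x, y)) has_derivative (\<lambda>v. inner (g (x, y)) (v, 0))) (at x)" .
  from strongly_convex_on_gradient_ineq[OF sconvex this, of x'] show ?thesis
    by (simp add: inner_Pair_0)
qed

lemma gradient_ineq_y: "- f (x, y) - inner (snd (g (x, y))) (y' - y) + \<mu> / 2 * (norm (y' - y))\<^sup>2 \<le> - f (x, y')"
proof -
  have "((\<lambda>y. (x, y)) has_derivative (\<lambda>v. (0, v))) (at y)"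
    by (intro derivative_intros)
  from has_derivative_minus[OF has_derivative_compose[OF this grad]]
  have "((\<lambda>y. - f (x, y)) has_derivative (\<lambda>v. - inner (g (x, y)) (0, v))) (at y)" .
  from strongly_convex_on_gradient_ineq[OF sconcave this, of y'] show ?thesis
    by (simp add: inner_Pair_0)
qed

text \<open>Sum of the four gradient inequalities at \<open>(x, y)\<close>, \<open>(x', y')\<close> in both variables.\<close>

lemma F_strongly_monotone: "\<mu> * (norm (z - z'))\<^sup>2 \<le> inner (F z - F z') (z - z')"
proof -
  obtain x y x' y' where z: "z = (x, y)" and z': "z' = (x', y')"
    by (cases z, cases z') auto
  have "inner (F z - F z') (z - z') = inner (fst (g (x, y)) - fst (g (x', y'))) (x - x')
      - inner (snd (g (x, y)) - snd (g (x', y'))) (y - y')"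
    unfolding z z' Fop_def by (simp add: algebra_simps)
  moreover have "(norm (z - z'))\<^sup>2 = (norm (x' - x))\<^sup>2 + (norm (y' - y))\<^sup>2"
    unfolding z z' power2_norm_prod by (simp add: norm_minus_commute)
  ultimately show ?thesis
    using gradient_ineq_x[of x y x'] gradient_ineq_x[of x' y' x]
      gradient_ineq_y[of x y y'] gradient_ineq_y[of x' y' y]
    by (simp add: norm_minus_commute inner_diff_left inner_diff_right algebra_simps)
qed

lemma inner_DF_ge: "\<mu> * (norm h)\<^sup>2 \<le> inner h (DF w h)"
proof -
  define p where "p t = inner h (F (w + t *\<^sub>R h))" for t
  have "(p has_real_derivative inner h (DF w h)) (at 0)"
    unfolding p_def using has_real_derivative_inner_along_line[OF F_has_derivative, where z=w and t=0 and v=h and e=h] by simp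
  then show ?thesis
  proof (rule deriv_ge_of_difference_quotients_ge[OF _ tendsto_const])
    fix t :: real assume t: "0 < t" "t < 1"
    have "\<mu> * (norm (t *\<^sub>R h))\<^sup>2 \<le> inner (F (w + t *\<^sub>R h) - F w) (t *\<^sub>R h)"
      using F_strongly_monotone[of "w + t *\<^sub>R h" w] by simp
    then have "t * (\<mu> * (norm h)\<^sup>2) * t \<le> (p t - p 0) * t"
      unfolding p_def using t by (simp add: inner_diff_left inner_commute power2_eq_square algebra_simps)
    then show "\<mu> * (norm h)\<^sup>2 \<le> (p t - p 0) / t"
      using t by (simp add: le_divide_eq mult.commute)
  qed
qed

lemma inner_H_x_ge: "\<mu> * (norm u)\<^sup>2 \<le> inner (u, 0) (H w (u, 0))"
  using inner_DF_ge[of "(u, 0)" w] by (simp add: DFop_def norm_Pair inner_prod_def)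

lemma inner_H_y_le: "inner (0, v) (H w (0, v)) \<le> - \<mu> * (norm v)\<^sup>2"
  using inner_DF_ge[of "(0, v)" w] by (simp add: DFop_def norm_Pair inner_prod_def)

lemma H_symmetric: "inner p (H w q) = inner q (H w p)"
proof -
  have "isCont H w"
    using hess_cont continuous_on_eq_continuous_at open_UNIV by blast
  then show ?thesis
    by (rule hessian_symmetric[OF grad hess])
qed

lemma F_lipschitz: "norm (F z - F z') \<le> L * norm (z - z')"
  by (rule differentiable_bound[of UNIV F DF L z z'])
     (auto intro: has_derivative_at_withinI F_has_derivative DF_bound)

lemma L2_nonneg: "L2 \<ge> 0"
proof -
  obtain e :: "'a \<times> 'b" where e: "norm e = 1"
    using vector_choose_size zero_le_one by blast
  have "0 \<le> onorm (\<lambda>h. DF e h - DF 0 h)"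
    by (intro onorm_pos_le bounded_linear_sub DF_bounded_linear)
  also have "\<dots> \<le> L2 * norm (e - 0)"
    by (rule DF_lip)
  finally show ?thesis using e by simp
qed

lemma mu_le_L: "\<mu> \<le> L"
proof -
  obtain e :: "'a \<times> 'b" where e: "norm e = 1"
    using vector_choose_size zero_le_one by blast
  have "\<mu> * (norm e)\<^sup>2 \<le> inner e (DF 0 e)" by (rule inner_DF_ge)
  also have "\<dots> \<le> norm e * norm (DF 0 e)" by (rule norm_cauchy_schwarz)
  also have "norm (DF 0 e) \<le> onorm (DF 0) * norm e" by (rule onorm[OF DF_bounded_linear])
  also have "onorm (DF 0) \<le> L" by (rule DF_bound)
  finally show ?thesis using e by simp
qed

lemma F_taylor: "norm (F (z + h) - F z - DF z h) \<le> L2 / 2 * (norm h)\<^sup>2"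
  by (rule lipschitz_derivative_taylor_bound[OF F_has_derivative DF_lip L2_nonneg])

lemma exists_F_zero: "\<exists>z. F z = 0"
proof (rule exists_zero_of_coercive[OF F_continuous mu_pos])
  fix p :: "'a \<times> 'b"
  have "- norm (F 0) * norm p \<le> inner (F 0) p"
    using norm_cauchy_schwarz[of "- F 0" p] by simp
  then show "\<mu> * (norm p)\<^sup>2 - norm (F 0) * norm p \<le> inner (F p) p"
    using F_strongly_monotone[of p 0] by (simp add: inner_diff_left)
qed

end

section \<open>The cubic model and its saddle point\<close>

definition cubic_grad :: "'a::real_normed_vector \<times> 'b::real_normed_vector \<Rightarrow> 'a \<times> 'b" where
  "cubic_grad d = (norm (fst d) *\<^sub>R fst d, norm (snd d) *\<^sub>R snd d)"

lemma inner_cubic_grad: "inner (cubic_grad d) d = norm (fst d) ^ 3 + norm (snd d) ^ 3"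
  unfolding cubic_grad_def
  by (simp add: inner_prod_def power2_norm_eq_inner[symmetric] power3_eq_cube power2_eq_square)

lemma power2_norm_cubic_grad: "(norm (cubic_grad d))\<^sup>2 = norm (fst d) ^ 4 + norm (snd d) ^ 4"
  unfolding cubic_grad_def by (simp add: power2_norm_prod power_mult_distrib flip: power_add)

context saddle_problem
begin

text \<open>\<open>model_field zk \<gamma> d\<close> is the \<open>x\<close>-gradient and the negated \<open>y\<close>-gradient of the cubic model
  \<open>crn_model f g H zk \<gamma>\<close> at \<open>zk + d\<close>; the CRN-SPP step is its unique zero.\<close>

definition model_field :: "'a \<times> 'b \<Rightarrow> real \<Rightarrow> 'a \<times> 'b \<Rightarrow> 'a \<times> 'b" where
  "model_field zk \<gamma> d = F zk + DF zk d + \<gamma> *\<^sub>R cubic_grad d"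

lemma crn_model_shift:
  "crn_model f g H zk \<gamma> (zk + e) = f zk + inner (g zk) e + 1/2 * inner e (H zk e)
     + \<gamma>/3 * norm (fst e) ^ 3 - \<gamma>/3 * norm (snd e) ^ 3"
  unfolding crn_model_def by simp

lemma fst_model_field:
  "fst (model_field zk \<gamma> d) = fst (g zk) + fst (H zk d) + (\<gamma> * norm (fst d)) *\<^sub>R fst d"
  unfolding model_field_def cubic_grad_def by (simp add: Fop_def DFop_def)

lemma snd_model_field:
  "snd (model_field zk \<gamma> d) = - snd (g zk) - snd (H zk d) + (\<gamma> * norm (snd d)) *\<^sub>R snd d"
  unfolding model_field_def cubic_grad_def by (simp add: Fop_def DFop_def)

lemma inner_model_field_ge:
  "\<mu> * (norm d)\<^sup>2 + \<gamma> * (norm (fst d) ^ 3 + norm (snd d) ^ 3) - norm (F zk) * norm d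
     \<le> inner (model_field zk \<gamma> d) d"
proof -
  have "- norm (F zk) * norm d \<le> inner (F zk) d"
    using norm_cauchy_schwarz[of "- F zk" d] by simp
  moreover have "inner (model_field zk \<gamma> d) d = inner (F zk) d + inner d (DF zk d) + \<gamma> * inner (cubic_grad d) d"
    unfolding model_field_def by (simp add: inner_add_left inner_commute[of "DF zk d" d])
  ultimately show ?thesis
    using inner_DF_ge[of d zk] by (simp add: inner_cubic_grad)
qed

lemma model_field_zero_ineq:
  assumes "model_field zk \<gamma> d = 0"
  shows "\<mu> * (norm d)\<^sup>2 + \<gamma> * (norm (fst d) ^ 3 + norm (snd d) ^ 3) \<le> norm (F zk) * norm d"
  using inner_model_field_ge[of d \<gamma> zk] assms by simp

lemma norm_le_of_model_field_zero:
  assumes "model_field zk \<gamma> d = 0" and "\<gamma> \<ge> 0"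
  shows "\<mu> * norm d \<le> norm (F zk)"
proof -
  have "0 \<le> \<gamma> * (norm (fst d) ^ 3 + norm (snd d) ^ 3)"
    using assms(2) by simp
  then have "\<mu> * norm d * norm d \<le> norm (F zk) * norm d"
    using model_field_zero_ineq[OF assms(1)] by (simp add: power2_eq_square)
  then show ?thesis
    by (cases "norm d = 0") (auto intro: mult_right_le_imp_le)
qed

lemma exists_model_field_zero:
  assumes "\<gamma> \<ge> 0"
  shows "\<exists>d. model_field zk \<gamma> d = 0"
proof (rule exists_zero_of_coercive[OF _ mu_pos])
  show "continuous_on UNIV (model_field zk \<gamma>)"
    unfolding model_field_def cubic_grad_def
    by (intro continuous_intros linear_continuous_on[OF DF_bounded_linear])
  show "\<mu> * (norm d)\<^sup>2 - norm (F zk) * norm d \<le> inner (model_field zk \<gamma> d) d" for d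
  proof -
    have "0 \<le> \<gamma> * (norm (fst d) ^ 3 + norm (snd d) ^ 3)"
      using assms by simp
    then show ?thesis
      using inner_model_field_ge[of d \<gamma> zk] by linarith
  qed
qed

lemma inner_H_add:
  "inner (d + e) (H zk (d + e)) = inner d (H zk d) + 2 * inner e (H zk d) + inner e (H zk e)"
  using H_symmetric[of d zk e] by (simp add: blinfun.add_right inner_add_left inner_add_right)

text \<open>At a zero of \<open>model_field\<close> the model grows at least quadratically in \<open>x\<close> and decreases
  at least quadratically in \<open>y\<close>: the quadratic part is \<open>\<mu>\<close>-convex/concave, and the cubic
  regulariser contributes through the gradient inequality for \<open>norm ^ 3 / 3\<close>.\<close>

lemma crn_model_x_growth:
  assumes zero: "model_field zk \<gamma> d = 0" and \<gamma>: "\<gamma> \<ge> 0"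
  shows "crn_model f g H zk \<gamma> (zk + d) + \<mu> / 2 * (norm a)\<^sup>2 \<le> crn_model f g H zk \<gamma> (zk + (d + (a, 0)))"
proof -
  define u where "u = fst d"
  have "inner (fst (g zk) + fst (H zk d) + (\<gamma> * norm u) *\<^sub>R u) a = 0"
    using zero fst_model_field[of zk \<gamma> d] unfolding u_def by simp
  then have "inner (g zk) (a, 0) + inner (a, 0) (H zk d) = - (\<gamma> * (norm u * inner u a))"
    by (simp add: inner_prod_def inner_add_left inner_commute[of a])
  moreover have "\<gamma> * (norm u * inner u a) \<le> \<gamma> * ((norm (u + a) ^ 3 - norm u ^ 3) / 3)"
    using mult_left_mono[OF norm_cube_gradient_ineq[of u "u + a"] \<gamma>] by simp
  ultimately show ?thesis
    using inner_H_add[of d "(a, 0)" zk] inner_H_x_ge[of a zk]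
    unfolding crn_model_shift by (simp add: u_def inner_add_right algebra_simps)
qed

lemma crn_model_y_decay:
  assumes zero: "model_field zk \<gamma> d = 0" and \<gamma>: "\<gamma> \<ge> 0"
  shows "crn_model f g H zk \<gamma> (zk + (d + (0, b))) + \<mu> / 2 * (norm b)\<^sup>2 \<le> crn_model f g H zk \<gamma> (zk + d)"
proof -
  define v where "v = snd d"
  have "inner (- snd (g zk) - snd (H zk d) + (\<gamma> * norm v) *\<^sub>R v) b = 0"
    using zero snd_model_field[of zk \<gamma> d] unfolding v_def by simp
  then have "inner (g zk) (0, b) + inner (0, b) (H zk d) = \<gamma> * (norm v * inner v b)"
    by (simp add: inner_prod_def inner_add_left inner_diff_left inner_commute[of b])
  moreover have "\<gamma> * (norm v * inner v b) \<le> \<gamma> * ((norm (v + b) ^ 3 - norm v ^ 3) / 3)"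
    using mult_left_mono[OF norm_cube_gradient_ineq[of v "v + b"] \<gamma>] by simp
  ultimately show ?thesis
    using inner_H_add[of d "(0, b)" zk] inner_H_y_le[of b zk]
    unfolding crn_model_shift by (simp add: v_def inner_add_right algebra_simps)
qed

lemma is_saddle_of_model_field_zero:
  assumes zero: "model_field zk \<gamma> d = 0" and \<gamma>: "\<gamma> \<ge> 0"
  shows "is_saddle (crn_model f g H zk \<gamma>) (zk + d)"
  unfolding is_saddle_def
proof (intro allI conjI)
  fix x y
  define a b where "a = x - fst zk - fst d" and "b = y - snd zk - snd d"
  have y_eq: "(fst (zk + d), y) = zk + (d + (0, b))"
    and x_eq: "(x, snd (zk + d)) = zk + (d + (a, 0))"
    unfolding a_def b_def by (simp_all add: prod_eq_iff)
  have "0 \<le> \<mu> / 2 * (norm a)\<^sup>2" "0 \<le> \<mu> / 2 * (norm b)\<^sup>2"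
    using mu_pos by simp_all
  then show "crn_model f g H zk \<gamma> (fst (zk + d), y) \<le> crn_model f g H zk \<gamma> (zk + d)"
    and "crn_model f g H zk \<gamma> (zk + d) \<le> crn_model f g H zk \<gamma> (x, snd (zk + d))"
    unfolding x_eq y_eq using crn_model_y_decay[OF zero \<gamma>, of b] crn_model_x_growth[OF zero \<gamma>, of a]
    by linarith+
qed

lemma saddle_eq_of_model_field_zero:
  assumes zero: "model_field zk \<gamma> d = 0" and \<gamma>: "\<gamma> \<ge> 0"
    and saddle: "is_saddle (crn_model f g H zk \<gamma>) (zk + d')"
  shows "d' = d"
proof -
  define a b where "a = fst d' - fst d" and "b = snd d' - snd d"
  have x_eq: "(fst (zk + d'), snd (zk + d)) = zk + (d + (a, 0))"
    and y_eq: "(fst (zk + d), snd (zk + d')) = zk + (d + (0, b))"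
    unfolding a_def b_def by (simp_all add: prod_eq_iff)
  have "crn_model f g H zk \<gamma> (fst (zk + d'), snd (zk + d)) \<le> crn_model f g H zk \<gamma> (zk + d')"
    and "crn_model f g H zk \<gamma> (zk + d') \<le> crn_model f g H zk \<gamma> (fst (zk + d), snd (zk + d'))"
    using saddle unfolding is_saddle_def by blast+
  then have "\<mu> / 2 * (norm a)\<^sup>2 + \<mu> / 2 * (norm b)\<^sup>2 \<le> 0"
    unfolding x_eq y_eq using crn_model_x_growth[OF zero \<gamma>, of a] crn_model_y_decay[OF zero \<gamma>, of b]
    by linarith
  moreover have "0 \<le> \<mu> / 2 * (norm a)\<^sup>2" "0 \<le> \<mu> / 2 * (norm b)\<^sup>2"
    using mu_pos by simp_all
  ultimately have "\<mu> / 2 * (norm a)\<^sup>2 = 0" "\<mu> / 2 * (norm b)\<^sup>2 = 0"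
    by linarith+
  then show ?thesis
    using mu_pos unfolding a_def b_def by (simp add: prod_eq_iff)
qed

lemma crn_disp_eq:
  assumes "model_field zk \<gamma> d = 0" and "\<gamma> \<ge> 0"
  shows "crn_disp f g H zk \<gamma> = d"
  unfolding crn_disp_def
  using is_saddle_of_model_field_zero[OF assms] saddle_eq_of_model_field_zero[OF assms]
  by (rule the_equality)

lemma model_field_crn_disp:
  assumes "\<gamma> \<ge> 0"
  shows "model_field zk \<gamma> (crn_disp f g H zk \<gamma>) = 0"
  using exists_model_field_zero[OF assms] crn_disp_eq[OF _ assms] by metis

end

section \<open>Convergence of CRN-SPP\<close>

lemma contraction_estimate:
  fixes \<phi> s X \<mu> Lm L2 \<alpha> :: real
  assumes \<mu>: "\<mu> > 0" and Lm: "Lm > 0" and \<phi>: "\<phi> \<ge> 0"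
    and L2: "L2 * \<phi> \<le> Lm" and \<alpha>: "\<alpha> = \<mu>\<^sup>2 / (2 * Lm)"
    and X: "X\<^sup>2 \<le> \<mu> * (\<phi> * s - \<mu> * s\<^sup>2)"
  shows "\<alpha> * X + L2 / 2 * \<alpha>\<^sup>2 * s\<^sup>2 \<le> 2 / 3 * \<alpha> * \<phi>"
proof (cases "\<phi> = 0")
  case True
  then have "X\<^sup>2 + (\<mu> * s)\<^sup>2 \<le> 0"
    using X by (simp add: power2_eq_square algebra_simps)
  then have "X = 0" "\<mu> * s = 0"
    by (simp_all only: sum_power2_le_zero_iff)
  then have "X = 0" "s = 0"
    using \<mu> by simp_all
  with True show ?thesis by simp
next
  case False
  then have \<phi>: "\<phi> > 0" using \<phi> by simp
  have \<alpha>_pos: "\<alpha> > 0" using \<alpha> \<mu> Lm by simp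
  have "0 \<le> 3 * (\<phi> - 2 * X)\<^sup>2 + 5 * (\<phi> - 6/5 * \<mu> * s)\<^sup>2 + 9/5 * \<mu>\<^sup>2 * s\<^sup>2"
    by simp
  with X have poly: "12 * \<phi> * X + 3 * \<mu>\<^sup>2 * s\<^sup>2 \<le> 8 * \<phi>\<^sup>2"
    by (simp add: power2_eq_square algebra_simps)
  have "L2 / 2 * \<alpha>\<^sup>2 * s\<^sup>2 * \<phi> = \<alpha>\<^sup>2 * s\<^sup>2 / 2 * (L2 * \<phi>)"
    by simp
  also have "\<dots> \<le> \<alpha>\<^sup>2 * s\<^sup>2 / 2 * Lm"
    using L2 by (simp add: mult_left_mono)
  also have "\<dots> = \<alpha> * \<mu>\<^sup>2 * s\<^sup>2 / 4"
    using \<alpha> Lm by (simp add: power2_eq_square field_simps)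
  finally have "(\<alpha> * X + L2 / 2 * \<alpha>\<^sup>2 * s\<^sup>2) * \<phi> \<le> \<alpha> * (12 * \<phi> * X + 3 * \<mu>\<^sup>2 * s\<^sup>2) / 12"
    by (simp add: algebra_simps)
  also have "\<dots> \<le> \<alpha> * (8 * \<phi>\<^sup>2) / 12"
    using poly \<alpha>_pos by simp
  also have "\<dots> = (2 / 3 * \<alpha> * \<phi>) * \<phi>"
    by (simp add: power2_eq_square)
  finally show ?thesis
    using \<phi> by simp
qed

context saddle_problem
begin

text \<open>The exact step \<open>d\<close> makes \<open>F zk + DF zk d\<close> equal to \<open>- \<gamma> *\<^sub>R cubic_grad d\<close>; the rest is
  the second-order Taylor remainder of \<open>F\<close>.\<close>

lemma norm_F_step_le:
  assumes zero: "model_field zk \<gamma> d = 0" and \<gamma>: "\<gamma> \<ge> 0" and \<alpha>: "0 \<le> \<alpha>" "\<alpha> \<le> 1"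
  shows "norm (F (zk + \<alpha> *\<^sub>R d))
    \<le> (1 - \<alpha>) * norm (F zk) + \<alpha> * (\<gamma> * norm (cubic_grad d)) + L2 / 2 * \<alpha>\<^sup>2 * (norm d)\<^sup>2"
proof -
  define R where "R = F (zk + \<alpha> *\<^sub>R d) - F zk - DF zk (\<alpha> *\<^sub>R d)"
  have DF_dir: "DF zk d = - F zk - \<gamma> *\<^sub>R cubic_grad d"
    using zero unfolding model_field_def by (simp add: algebra_simps eq_neg_iff_add_eq_0)
  have DF_scale: "DF zk (\<alpha> *\<^sub>R d) = \<alpha> *\<^sub>R DF zk d"
    using linear_scale[OF bounded_linear.linear[OF DF_bounded_linear]] .
  have "F (zk + \<alpha> *\<^sub>R d) = (1 - \<alpha>) *\<^sub>R F zk - (\<alpha> * \<gamma>) *\<^sub>R cubic_grad d + R"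
    unfolding R_def DF_scale DF_dir by (simp add: algebra_simps)
  then have "norm (F (zk + \<alpha> *\<^sub>R d)) \<le> norm ((1 - \<alpha>) *\<^sub>R F zk) + norm ((\<alpha> * \<gamma>) *\<^sub>R cubic_grad d) + norm R"
    using norm_triangle_ineq[of "(1 - \<alpha>) *\<^sub>R F zk - (\<alpha> * \<gamma>) *\<^sub>R cubic_grad d" R]
      norm_triangle_ineq4[of "(1 - \<alpha>) *\<^sub>R F zk" "(\<alpha> * \<gamma>) *\<^sub>R cubic_grad d"] by simp
  moreover have "norm R \<le> L2 / 2 * \<alpha>\<^sup>2 * (norm d)\<^sup>2"
    using F_taylor[of zk "\<alpha> *\<^sub>R d"] \<alpha> unfolding R_def by (simp add: power_mult_distrib)
  ultimately show ?thesis
    using \<alpha> \<gamma> by simp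
qed

lemma cubic_grad_bound:
  assumes zero: "model_field zk \<gamma> d = 0" and \<gamma>: "\<gamma> \<ge> 0"
    and test: "\<gamma> * (norm (fst d) + norm (snd d)) \<le> \<mu>"
  shows "(\<gamma> * norm (cubic_grad d))\<^sup>2 \<le> \<mu> * (norm (F zk) * norm d - \<mu> * (norm d)\<^sup>2)"
proof -
  define a b where "a = norm (fst d)" and "b = norm (snd d)"
  have ab: "a \<ge> 0" "b \<ge> 0" unfolding a_def b_def by simp_all
  have "(\<gamma> * norm (cubic_grad d))\<^sup>2 = \<gamma>\<^sup>2 * (a ^ 4 + b ^ 4)"
    unfolding a_def b_def by (simp add: power_mult_distrib power2_norm_cubic_grad)
  also have "\<dots> \<le> \<gamma>\<^sup>2 * ((a + b) * (a ^ 3 + b ^ 3))"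
    using ab by (intro mult_left_mono) (simp_all add: algebra_simps power_numeral_reduce)
  also have "\<dots> = (\<gamma> * (a + b)) * (\<gamma> * (a ^ 3 + b ^ 3))"
    by (simp add: power2_eq_square)
  also have "\<dots> \<le> \<mu> * (\<gamma> * (a ^ 3 + b ^ 3))"
    using test \<gamma> ab unfolding a_def b_def by (intro mult_right_mono) simp_all
  also have "\<dots> \<le> \<mu> * (norm (F zk) * norm d - \<mu> * (norm d)\<^sup>2)"
    using model_field_zero_ineq[OF zero] mu_pos unfolding a_def b_def by (intro mult_left_mono) simp_all
  finally show ?thesis .
qed

lemma norm_F_step_contracts:
  assumes zero: "model_field zk \<gamma> d = 0" and \<gamma>: "\<gamma> \<ge> 0"
    and test: "\<gamma> * (norm (fst d) + norm (snd d)) \<le> \<mu>"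
    and Lm: "\<mu>\<^sup>2 \<le> Lm" "L2 * norm (F zk) \<le> Lm" and \<alpha>: "\<alpha> = \<mu>\<^sup>2 / (2 * Lm)"
  shows "norm (F (zk + \<alpha> *\<^sub>R d)) \<le> (1 - \<alpha> / 3) * norm (F zk)"
proof -
  have Lm_pos: "Lm > 0"
    using Lm(1) mu_pos zero_less_power[of \<mu> 2] by linarith
  have "0 \<le> \<alpha>" "\<alpha> \<le> 1"
    using \<alpha> Lm(1) Lm_pos by (simp_all add: divide_le_eq)
  then have "norm (F (zk + \<alpha> *\<^sub>R d))
      \<le> (1 - \<alpha>) * norm (F zk) + (\<alpha> * (\<gamma> * norm (cubic_grad d)) + L2 / 2 * \<alpha>\<^sup>2 * (norm d)\<^sup>2)"
    using norm_F_step_le[OF zero \<gamma>] by (simp add: add.assoc)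
  also have "\<dots> \<le> (1 - \<alpha>) * norm (F zk) + 2 / 3 * \<alpha> * norm (F zk)"
    using contraction_estimate[OF mu_pos Lm_pos _ Lm(2) \<alpha> cubic_grad_bound[OF zero \<gamma> test]] by simp
  finally show ?thesis
    by (simp add: algebra_simps)
qed

lemma merit_le_iff: "merit g w \<le> merit g z \<longleftrightarrow> norm (F w) \<le> norm (F z)"
  unfolding merit_def by (simp add: power_mono_iff)

definition level_radius :: "'a \<times> 'b \<Rightarrow> real" where
  "level_radius z0 = Sup {norm (w - z0) | w. merit g w \<le> merit g z0}"

lemma level_set_bounded: "bdd_above {norm (w - z0) | w. merit g w \<le> merit g z0}"
proof -
  obtain zs where zs: "F zs = 0" using exists_F_zero by blast
  have "norm (w - z0) \<le> norm (F z0) / \<mu> + norm (zs - z0)" if "merit g w \<le> merit g z0" for w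
  proof -
    have "\<mu> * (norm (w - zs))\<^sup>2 \<le> inner (F w) (w - zs)"
      using F_strongly_monotone[of w zs] zs by simp
    also have "\<dots> \<le> norm (F w) * norm (w - zs)"
      by (rule norm_cauchy_schwarz)
    finally have "\<mu> * norm (w - zs) \<le> norm (F w)"
      by (cases "norm (w - zs) = 0") (auto simp: power2_eq_square intro: mult_right_le_imp_le)
    then have "norm (w - zs) \<le> norm (F z0) / \<mu>"
      using that mu_pos by (simp add: merit_le_iff le_divide_eq mult.commute)
    then show ?thesis
      using norm_triangle_ineq[of "w - zs" "zs - z0"] by simp
  qed
  then show ?thesis
    by (intro bdd_aboveI[of _ "norm (F z0) / \<mu> + norm (zs - z0)"]) blast
qed

lemma level_radius_nonneg: "level_radius z0 \<ge> 0"
proof -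
  have "norm (z0 - z0) \<in> {norm (w - z0) | w. merit g w \<le> merit g z0}"
    by blast
  then show ?thesis
    unfolding level_radius_def by (rule cSup_upper2[OF _ _ level_set_bounded]) simp
qed

lemma mu_sq_le_level_constant: "\<mu>\<^sup>2 \<le> L\<^sup>2 + L * L2 * level_radius z0"
proof -
  have "\<mu>\<^sup>2 \<le> L\<^sup>2"
    using mu_le_L mu_pos by (simp add: power_mono)
  moreover have "0 \<le> L * L2 * level_radius z0"
    using mu_le_L mu_pos L2_nonneg level_radius_nonneg[of z0] by simp
  ultimately show ?thesis
    by linarith
qed

lemma norm_F_le_level_radius: "norm (F z0) \<le> L * level_radius z0"
proof -
  obtain zs where zs: "F zs = 0" using exists_F_zero by blast
  then have "merit g zs \<le> merit g z0"
    by (simp add: merit_le_iff)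
  then have "norm (zs - z0) \<in> {norm (w - z0) | w. merit g w \<le> merit g z0}"
    by blast
  then have "norm (zs - z0) \<le> level_radius z0"
    unfolding level_radius_def by (rule cSup_upper[OF _ level_set_bounded])
  moreover have "norm (F z0) \<le> L * norm (zs - z0)"
    using F_lipschitz[of z0 zs] zs by (simp add: norm_minus_commute)
  moreover have "L \<ge> 0"
    using mu_le_L mu_pos by simp
  ultimately show ?thesis
    by (meson mult_left_mono order_trans)
qed

end

locale crn_method = saddle_problem f g H \<mu> L L2
  for f :: "('a::euclidean_space) \<times> ('b::euclidean_space) \<Rightarrow> real" and g H \<mu> L L2 +
  fixes \<gamma>bar \<rho> :: real
  assumes gbar_pos: "\<gamma>bar > 0" and rho: "0 < \<rho>" "\<rho> < 1"
begin

abbreviation "reg zk \<equiv> crn_gamma f g H \<mu> \<gamma>bar \<rho> zk"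
abbreviation "dir zk \<equiv> crn_disp f g H zk (reg zk)"

text \<open>The step length is at most \<open>norm (F zk) / \<mu>\<close> whatever \<open>\<gamma>\<close> is, so the test passes
  as soon as \<open>\<gamma>\<close> is small enough.\<close>

lemma backtracking_terminates:
  "\<exists>j. \<gamma>bar * \<rho> ^ j * (norm (fst (crn_disp f g H zk (\<gamma>bar * \<rho> ^ j)))
                      + norm (snd (crn_disp f g H zk (\<gamma>bar * \<rho> ^ j)))) \<le> \<mu>"
proof -
  define K where "K = 2 * norm (F zk) / \<mu> + 1"
  have K: "K > 0" unfolding K_def using mu_pos by (simp add: add_nonneg_pos)
  obtain j where j: "\<rho> ^ j < \<mu> / (\<gamma>bar * K)"
    using real_arch_pow_inv[of "\<mu> / (\<gamma>bar * K)" \<rho>] mu_pos gbar_pos K rho by auto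
  define \<gamma> d where "\<gamma> = \<gamma>bar * \<rho> ^ j" and "d = crn_disp f g H zk \<gamma>"
  have \<gamma>: "\<gamma> \<ge> 0" unfolding \<gamma>_def using gbar_pos rho by simp
  have "\<mu> * norm d \<le> norm (F zk)"
    using norm_le_of_model_field_zero[OF model_field_crn_disp[OF \<gamma>] \<gamma>] unfolding d_def .
  then have "norm d \<le> norm (F zk) / \<mu>"
    using mu_pos by (simp add: le_divide_eq mult.commute)
  then have "norm (fst d) + norm (snd d) \<le> K"
    using norm_fst_le[of "fst d" "snd d"] norm_snd_le[of "snd d" "fst d"] unfolding K_def by simp
  then have "\<gamma> * (norm (fst d) + norm (snd d)) \<le> \<gamma>bar * \<rho> ^ j * K"
    using \<gamma> unfolding \<gamma>_def by (rule mult_left_mono)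
  also have "\<dots> < \<mu>"
    using j gbar_pos K by (simp add: less_divide_eq mult_ac)
  finally show ?thesis
    unfolding \<gamma>_def d_def by (intro exI[of _ j]) simp
qed

lemma reg_pos: "reg zk > 0"
  unfolding crn_gamma_def using gbar_pos rho by simp

lemma model_field_dir: "model_field zk (reg zk) (dir zk) = 0"
  by (rule model_field_crn_disp) (rule less_imp_le[OF reg_pos])

lemma reg_dir_test: "reg zk * (norm (fst (dir zk)) + norm (snd (dir zk))) \<le> \<mu>"
  unfolding crn_gamma_def by (rule LeastI_ex[OF backtracking_terminates])

lemma merit_crn_step_le:
  assumes Lm: "\<mu>\<^sup>2 \<le> Lm" "L2 * norm (F zk) \<le> Lm" and \<alpha>: "\<alpha> = \<mu>\<^sup>2 / (2 * Lm)"
  shows "merit g (crn_step f g H \<mu> \<gamma>bar \<rho> \<alpha> zk) \<le> (1 - \<alpha> / 3)\<^sup>2 * merit g zk"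
proof -
  have "norm (F (zk + \<alpha> *\<^sub>R dir zk)) \<le> (1 - \<alpha> / 3) * norm (F zk)"
    by (rule norm_F_step_contracts[OF model_field_dir less_imp_le[OF reg_pos] reg_dir_test Lm \<alpha>])
  then have "(norm (F (zk + \<alpha> *\<^sub>R dir zk)))\<^sup>2 \<le> ((1 - \<alpha> / 3) * norm (F zk))\<^sup>2"
    by (rule power_mono) simp
  then have "merit g (zk + \<alpha> *\<^sub>R dir zk) \<le> (1 - \<alpha> / 3)\<^sup>2 * merit g zk"
    unfolding merit_def by (simp add: power_mult_distrib)
  moreover have "merit g (crn_step f g H \<mu> \<gamma>bar \<rho> \<alpha> zk) \<le> merit g (zk + \<alpha> *\<^sub>R dir zk)"
    unfolding crn_step_def Let_def by simp
  ultimately show ?thesis by linarith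
qed

lemma merit_crn_iterates_le:
  fixes z :: "nat \<Rightarrow> 'a \<times> 'b"
  defines "Lm \<equiv> L\<^sup>2 + L * L2 * level_radius (z 0)"
  assumes seq: "\<And>k. z (Suc k) = crn_step f g H \<mu> \<gamma>bar \<rho> (\<mu>\<^sup>2 / (2 * Lm)) (z k)"
  shows "merit g (z (Suc k)) \<le> (1 - \<mu>\<^sup>2 / (6 * Lm))\<^sup>2 * merit g (z k)"
proof -
  define c where "c = (1 - \<mu>\<^sup>2 / (6 * Lm))\<^sup>2"
  have Lm: "\<mu>\<^sup>2 \<le> Lm"
    unfolding Lm_def by (rule mu_sq_le_level_constant)
  have "0 < \<mu>\<^sup>2"
    using mu_pos by simp
  then have "Lm > 0"
    using Lm by linarith
  then have "0 \<le> \<mu>\<^sup>2 / (6 * Lm)" "\<mu>\<^sup>2 / (6 * Lm) \<le> 1"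
    using Lm by (simp_all add: divide_le_eq)
  then have c: "0 \<le> c" "c \<le> 1"
    unfolding c_def by (simp_all add: power_le_one)
  text \<open>The iterates stay in the level set of \<open>z 0\<close>, where \<open>L2 * norm (F zk) \<le> Lm\<close>.\<close>
  have step: "merit g (z (Suc n)) \<le> c * merit g (z n)" if "merit g (z n) \<le> merit g (z 0)" for n
  proof -
    have "L2 * norm (F (z n)) \<le> L2 * (L * level_radius (z 0))"
      using that norm_F_le_level_radius[of "z 0"] L2_nonneg
      by (meson merit_le_iff mult_left_mono order_trans)
    also have "\<dots> \<le> Lm"
      unfolding Lm_def by (simp add: algebra_simps)
    finally show ?thesis
      using merit_crn_step_le[OF Lm _ refl, of "z n"] unfolding seq c_def by simp
  qed
  have "merit g (z n) \<le> merit g (z 0)" for n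
  proof (induction n)
    case (Suc n)
    have "c * merit g (z n) \<le> merit g (z n)"
      using c by (simp add: merit_def mult_left_le_one_le)
    with step[OF Suc.IH] Suc.IH show ?case by linarith
  qed simp
  then show ?thesis
    using step c_def by blast
qed

lemma merit_crn_iterates_below:
  fixes z :: "nat \<Rightarrow> 'a \<times> 'b"
  defines "Lm \<equiv> L\<^sup>2 + L * L2 * level_radius (z 0)"
  assumes seq: "\<And>k. z (Suc k) = crn_step f g H \<mu> \<gamma>bar \<rho> (\<mu>\<^sup>2 / (2 * Lm)) (z k)"
    and \<epsilon>: "\<epsilon> > 0" and k: "3 * Lm / \<mu>\<^sup>2 * ln (merit g (z 0) / \<epsilon>) \<le> real k"
  shows "merit g (z k) \<le> \<epsilon>"
proof -
  define q where "q = \<mu>\<^sup>2 / (6 * Lm)"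
  have "0 < \<mu>\<^sup>2" "\<mu>\<^sup>2 \<le> Lm"
    using mu_pos mu_sq_le_level_constant unfolding Lm_def by simp_all
  then have Lm: "0 < \<mu>\<^sup>2" "\<mu>\<^sup>2 \<le> Lm" "0 < Lm"
    by linarith+
  then have q: "0 < q" "q \<le> 1"
    unfolding q_def by (simp_all add: divide_le_eq)
  show ?thesis
  proof (rule geometric_decay_below[where a = "\<lambda>k. merit g (z k)" and c = "(1 - q)\<^sup>2" and r = "2 * q"])
    show "merit g (z (Suc n)) \<le> (1 - q)\<^sup>2 * merit g (z n)" for n
      unfolding q_def Lm_def by (rule merit_crn_iterates_le[OF seq[unfolded Lm_def]])
    show "(1 - q)\<^sup>2 \<le> exp (- (2 * q))"
      using q(2) by (rule one_minus_square_le_exp)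
    show "ln (merit g (z 0) / \<epsilon>) / (2 * q) \<le> real k"
      using k Lm unfolding q_def by (simp add: field_simps)
  qed (use q \<epsilon> in \<open>simp_all add: merit_def\<close>)
qed

end

theorem theorem3p5:
  fixes f :: "(real^'n) \<times> (real^'m) \<Rightarrow> real"
    and g :: "(real^'n) \<times> (real^'m) \<Rightarrow> (real^'n) \<times> (real^'m)"
    and H :: "(real^'n) \<times> (real^'m) \<Rightarrow> ((real^'n) \<times> (real^'m)) \<Rightarrow>\<^sub>L ((real^'n) \<times> (real^'m))"
    and z :: "nat \<Rightarrow> (real^'n) \<times> (real^'m)"
    and \<mu> L L2 \<gamma>bar \<rho> :: real
  assumes grad: "\<And>w. (f has_derivative (\<lambda>h. inner (g w) h)) (at w)"
    and hess: "\<And>w. (g has_derivative blinfun_apply (H w)) (at w)"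
    and hess_cont: "continuous_on UNIV H"
    and mu_pos: "\<mu> > 0"
    and sconvex: "\<And>y. strongly_convex_on UNIV \<mu> (\<lambda>x. f (x, y))"
    and sconcave: "\<And>x. strongly_convex_on UNIV \<mu> (\<lambda>y. - f (x, y))"
    and DF_bound: "\<And>w. onorm (DFop H w) \<le> L"
    and DF_lip: "\<And>w w'. onorm (\<lambda>h. DFop H w h - DFop H w' h) \<le> L2 * norm (w - w')"
    and gbar: "\<gamma>bar > 0"
    and rho: "0 < \<rho>" "\<rho> < 1"
    and seq: "\<And>k. z (Suc k) =
       crn_step f g H \<mu> \<gamma>bar \<rho>
         (\<mu>\<^sup>2 / (2 * (L\<^sup>2 + L * L2 * Sup {norm (w - z 0) | w. merit g w \<le> merit g (z 0)})))
         (z k)"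
  shows "(\<forall>k. merit g (z (Suc k)) \<le>
            (1 - \<mu>\<^sup>2 / (6 * (L\<^sup>2 + L * L2 * Sup {norm (w - z 0) | w. merit g w \<le> merit g (z 0)})))\<^sup>2
              * merit g (z k))
       \<and> (\<forall>\<epsilon>>0. \<forall>k. real k \<ge> 3 * (L\<^sup>2 + L * L2 * Sup {norm (w - z 0) | w. merit g w \<le> merit g (z 0)}) / \<mu>\<^sup>2
                                 * ln (merit g (z 0) / \<epsilon>)
            \<longrightarrow> merit g (z k) \<le> \<epsilon>)"
proof -
  interpret crn_method f g H \<mu> L L2 \<gamma>bar \<rho>
    using grad hess hess_cont mu_pos sconvex sconcave DF_bound DF_lip gbar rho
    by unfold_locales auto
  show ?thesis
    using merit_crn_iterates_le[unfolded level_radius_def, OF seq]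
      merit_crn_iterates_below[unfolded level_radius_def, OF seq]
    by blast
qed

end
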